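(* Let $\mathcal{I}=(G,V^\infty,T,k)$ be an instance of \textsc{OddMultiwayNodeCut} with $G$ a DAG, and let $Z\subseteq V(G)\setminus T$. Let $(G',V'^\infty):=\mathrm{torso}(G,V^\infty,Z)$ and $\mathcal{I}':=(G',V'^\infty,T,k)$. Then $\mathcal{I}$ admits a solution of size at most $k$ that is disjoint from $Z$ if and only if $\mathcal{I}'$ admits a solution of size at most $k$.
   Context: Paths are simple directed paths; a path is odd if it has an odd number of edges. An instance $(G,V^\infty,T,k)$ of \textsc{OddMultiwayNodeCut} consists of a DAG $G$, protected nodes $V^\infty\subseteq V(G)$, terminals $T\subseteq V^\infty$ and $k\in\mathbb{Z}_+$. A $T$-path is a path with both end nodes in $T$. A solution is a set $M\subseteq V(G)\setminus V^\infty$ intersecting every odd $T$-path. Parity-preserving torso. Given a DAG $G$ and $Z,V^\infty\subseteq V(G)$, first form $G_0$ from $G\setminus Z$ by adding an edge $u\rightarrow v$ for every pair of distinct $u,v\in V(G)\setminus Z$ such that $G$ has an odd $u\rightarrow v$ path with all internal nodes in $Z$. Then, for every pair of distinct $u,v\in V(G)\setminus Z$ such that $G$ has an even $u\rightarrow v$ path with all internal nodes in $Z$, add a new node $x_{uv}$ and edges $u\rightarrow x_{uv}$, $x_{uv}\rightarrow v$. The result is $G'$. Set $V'^\infty:=(V^\infty\setminus Z)\cup\{\text{new nodes }x_{uv}\}$, and $\mathrm{torso}(G,V^\infty,Z):=(G',V'^\infty)$. *)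

theory Defs
  imports Main
begin

definition dag :: "'a set \<Rightarrow> ('a \<times> 'a) set \<Rightarrow> bool" where
  "dag V E \<longleftrightarrow> finite V \<and> E \<subseteq> V \<times> V \<and> acyclic E"

definition is_path :: "'a set \<Rightarrow> ('a \<times> 'a) set \<Rightarrow> 'a list \<Rightarrow> bool" where
  "is_path V E p \<longleftrightarrow> p \<noteq> [] \<and> distinct p \<and> set p \<subseteq> V \<and>
     (\<forall>i. Suc i < length p \<longrightarrow> (p ! i, p ! Suc i) \<in> E)"

definition path_len :: "'a list \<Rightarrow> nat" where
  "path_len p = length p - 1"

definition odd_T_path :: "'a set \<Rightarrow> ('a \<times> 'a) set \<Rightarrow> 'a set \<Rightarrow> 'a list \<Rightarrow> bool" where
  "odd_T_path V E T p \<longleftrightarrow> is_path V E p \<and> odd (path_len p) \<and> hd p \<in> T \<and> last p \<in> T"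

text \<open>A solution of OddMultiwayNodeCut: a set of unprotected nodes meeting every odd T-path.\<close>

definition omnc_solution :: "'a set \<Rightarrow> ('a \<times> 'a) set \<Rightarrow> 'a set \<Rightarrow> 'a set \<Rightarrow> 'a set \<Rightarrow> bool" where
  "omnc_solution V E Vinf T M \<longleftrightarrow> M \<subseteq> V - Vinf \<and>
     (\<forall>p. odd_T_path V E T p \<longrightarrow> set p \<inter> M \<noteq> {})"

definition Z_path :: "'a set \<Rightarrow> ('a \<times> 'a) set \<Rightarrow> 'a set \<Rightarrow> bool \<Rightarrow> 'a \<Rightarrow> 'a \<Rightarrow> bool" where
  "Z_path V E Z b u v \<longleftrightarrow> (\<exists>p. is_path V E p \<and> hd p = u \<and> last p = v \<and>
       set (butlast (tl p)) \<subseteq> Z \<and> odd (path_len p) = b)"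

text \<open>Parity-preserving torso. Old nodes are tagged Inl, new nodes x_uv are Inr (u,v).\<close>

definition torso_new :: "'a set \<Rightarrow> ('a \<times> 'a) set \<Rightarrow> 'a set \<Rightarrow> ('a \<times> 'a) set" where
  "torso_new V E Z = {(u, v). u \<in> V - Z \<and> v \<in> V - Z \<and> u \<noteq> v \<and> Z_path V E Z False u v}"

definition torso_V :: "'a set \<Rightarrow> ('a \<times> 'a) set \<Rightarrow> 'a set \<Rightarrow> ('a + 'a \<times> 'a) set" where
  "torso_V V E Z = Inl ` (V - Z) \<union> Inr ` torso_new V E Z"

definition torso_E :: "'a set \<Rightarrow> ('a \<times> 'a) set \<Rightarrow> 'a set \<Rightarrow> (('a + 'a \<times> 'a) \<times> ('a + 'a \<times> 'a)) set" where
  "torso_E V E Z =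
     {(Inl u, Inl v) | u v. (u, v) \<in> E \<and> u \<notin> Z \<and> v \<notin> Z}
   \<union> {(Inl u, Inl v) | u v. u \<in> V - Z \<and> v \<in> V - Z \<and> u \<noteq> v \<and> Z_path V E Z True u v}
   \<union> {(Inl u, Inr (u, v)) | u v. (u, v) \<in> torso_new V E Z}
   \<union> {(Inr (u, v), Inl v) | u v. (u, v) \<in> torso_new V E Z}"

definition torso_Vinf :: "'a set \<Rightarrow> ('a \<times> 'a) set \<Rightarrow> 'a set \<Rightarrow> 'a set \<Rightarrow> ('a + 'a \<times> 'a) set" where
  "torso_Vinf V E Vinf Z = Inl ` (Vinf - Z) \<union> Inr ` torso_new V E Z"

end

theory Submission
  imports Defs
begin

text \<open>An edge between old
  nodes of the torso stands for an odd path through Z, and a detour through a new node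
  x_uv for an even one, so expanding a torso path gives a walk of G of the same
  parity; as G is acyclic this walk is a path, and its nodes outside Z are old nodes of the
  torso path. Conversely, cutting a path of G at its nodes outside Z turns each maximal
  segment through Z into one or two torso edges according to its parity, and distinct cut
  points give distinct torso nodes. Since the new nodes are protected, a torso solution
  consists of old nodes outside Z, so solutions correspond one-to-one.\<close>

lemma is_path_iff_successively:
  "is_path V E p \<longleftrightarrow> p \<noteq> [] \<and> distinct p \<and> set p \<subseteq> V \<and> successively (\<lambda>x y. (x, y) \<in> E) p"
  unfolding is_path_def successively_conv_nth by blast

lemma is_path_appendD:
  assumes "is_path V E (p @ q)"
  shows "p \<noteq> [] \<Longrightarrow> is_path V E p" and "q \<noteq> [] \<Longrightarrow> is_path V E q"
  using assms unfolding is_path_iff_successively by (auto simp: successively_append_iff)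

lemma odd_path_len_iff: "p \<noteq> [] \<Longrightarrow> odd (path_len p) \<longleftrightarrow> even (length p)"
  by (cases p) (auto simp: path_len_def)

lemma distinct_if_successively_acyclic:
  assumes "acyclic E" "successively (\<lambda>x y. (x, y) \<in> E) p"
  shows "distinct p"
proof -
  have "successively (\<lambda>x y. (x, y) \<in> E\<^sup>+) p"
    using assms(2) by (rule successively_mono) auto
  then have "sorted_wrt (\<lambda>x y. (x, y) \<in> E\<^sup>+) p"
    by (subst (asm) successively_conv_sorted_wrt) (auto intro: transpI trancl_trans)
  then show ?thesis
    using assms(1) unfolding acyclic_def by (induction p) auto
qed

lemma successively_append_tl:
  assumes "successively P r" "successively P q" "last r = hd q" "r \<noteq> []" "q \<noteq> []"
  shows "successively P (r @ tl q)" and "last (r @ tl q) = last q"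
  using assms by (cases q; cases "tl q"; auto simp: successively_append_iff)+

lemma set_subset_ends_butlast_tl: "set p \<subseteq> {hd p, last p} \<union> set (butlast (tl p))"
  by (cases p rule: rev_cases; cases "butlast p") auto

lemma Z_pathE:
  assumes "Z_path V E Z b u v"
  obtains r where "r \<noteq> []" "successively (\<lambda>x y. (x, y) \<in> E) r" "hd r = u" "last r = v"
    "set r \<subseteq> {u, v} \<union> Z" "even (length r) \<longleftrightarrow> b"
proof -
  obtain r where r: "is_path V E r" "hd r = u" "last r = v" "set (butlast (tl r)) \<subseteq> Z" "odd (path_len r) = b"
    using assms unfolding Z_path_def by blast
  then have "r \<noteq> []" by (simp add: is_path_def)
  then show thesis
    using that r set_subset_ends_butlast_tl[of r] odd_path_len_iff[of r]
    unfolding is_path_iff_successively by blast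
qed

text \<open>The prefix pre is empty for an edge between old nodes and the single new node
  x_ac for a detour.\<close>

lemma torso_walk_first_step:
  assumes "successively (\<lambda>x y. (x, y) \<in> torso_E V E Z) (Inl a # p')"
    and "p' \<noteq> []" and "last p' \<in> range Inl"
  obtains pre c rest r where "p' = pre @ Inl c # rest"
    and "r \<noteq> []" "successively (\<lambda>x y. (x, y) \<in> E) r" "hd r = a" "last r = c"
    and "set r \<subseteq> {a, c} \<union> Z" "even (length r) \<longleftrightarrow> even (length pre)"
proof -
  obtain y p'' where p': "p' = y # p''"
    using assms(2) by (cases p') auto
  have edge: "(Inl a, y) \<in> torso_E V E Z"
    using assms(1) p' by simp
  show thesis
  proof (cases y)
    case (Inl c)
    then have "(a, c) \<in> E \<or> Z_path V E Z True a c"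
      using edge unfolding torso_E_def by auto
    then obtain r where "r \<noteq> []" "successively (\<lambda>x y. (x, y) \<in> E) r" "hd r = a" "last r = c"
      "set r \<subseteq> {a, c} \<union> Z" "even (length r)"
    proof
      assume "(a, c) \<in> E"
      then show thesis
        using that[of "[a, c]"] by simp
    next
      assume "Z_path V E Z True a c"
      then show thesis
        by (elim Z_pathE) (simp add: that)
    qed
    then show thesis
      using that[of "[]" c p''] p' Inl by simp
  next
    case (Inr uv)
    then obtain c where new: "(a, c) \<in> torso_new V E Z" and y: "y = Inr (a, c)"
      using edge unfolding torso_E_def by auto
    obtain w rest where p'': "p'' = w # rest"
      using assms(3) p' y by (cases p'') auto
    have "(Inr (a, c), w) \<in> torso_E V E Z"
      using assms(1) p' p'' y by simp
    then have "w = Inl c"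
      unfolding torso_E_def by auto
    moreover obtain r where "r \<noteq> []" "successively (\<lambda>x y. (x, y) \<in> E) r" "hd r = a" "last r = c"
      "set r \<subseteq> {a, c} \<union> Z" "odd (length r)"
      using new unfolding torso_new_def by (auto elim!: Z_pathE)
    ultimately show thesis
      using that[of "[y]" c rest] p' p'' by simp
  qed
qed

lemma walk_of_torso_walk:
  assumes "successively (\<lambda>x y. (x, y) \<in> torso_E V E Z) p'" "p' \<noteq> []"
    and "hd p' = Inl a" "last p' = Inl b"
  shows "\<exists>q. q \<noteq> [] \<and> successively (\<lambda>x y. (x, y) \<in> E) q \<and> hd q = a \<and> last q = b \<and>
    set q \<subseteq> Inl -` set p' \<union> Z \<and> (even (length q) \<longleftrightarrow> even (length p'))"
  using assms
proof (induction "length p'" arbitrary: p' a rule: less_induct)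
  case less
  then obtain tl' where p': "p' = Inl a # tl'"
    by (cases p') auto
  show ?case
  proof (cases "tl' = []")
    case True
    then show ?thesis
      using less.prems p' by (intro exI[of _ "[a]"]) auto
  next
    case False
    moreover have "last tl' \<in> range Inl"
      using less.prems(4) p' False by simp
    ultimately obtain pre c rest r where split: "tl' = pre @ Inl c # rest"
      and r: "r \<noteq> []" "successively (\<lambda>x y. (x, y) \<in> E) r" "hd r = a" "last r = c"
        "set r \<subseteq> {a, c} \<union> Z" "even (length r) \<longleftrightarrow> even (length pre)"
      using torso_walk_first_step[of V E Z a tl'] less.prems(1) p' by blast
    have "successively (\<lambda>x y. (x, y) \<in> torso_E V E Z) (Inl c # rest)"
      using less.prems(1) successively_append_iff[of _ "Inl a # pre" "Inl c # rest"] p' split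
      by simp
    moreover have "length (Inl c # rest) < length p'" "last (Inl c # rest) = Inl b"
      using less.prems(4) p' split by auto
    ultimately obtain q where q: "q \<noteq> []" "successively (\<lambda>x y. (x, y) \<in> E) q" "hd q = c" "last q = b"
      "set q \<subseteq> Inl -` set (Inl c # rest) \<union> Z" "even (length q) \<longleftrightarrow> even (length (Inl c # rest))"
      using less.hyps by (metis list.distinct(1) list.sel(1))
    show ?thesis
    proof (intro exI conjI)
      show "successively (\<lambda>x y. (x, y) \<in> E) (r @ tl q)" "last (r @ tl q) = b"
        using successively_append_tl[OF r(2) q(2)] r q by auto
      show "set (r @ tl q) \<subseteq> Inl -` set p' \<union> Z"
        using r(5) q(1,5) p' split by (cases q) auto
      show "even (length (r @ tl q)) \<longleftrightarrow> even (length p')"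
        using r(6) q(1,6) p' split by (cases q) auto
    qed (use r in auto)
  qed
qed

lemma path_exit_Z_segment:
  assumes "is_path V E (a # p)" "p \<noteq> []" "last p \<notin> Z"
  obtains zs c rest where "p = zs @ c # rest" "c \<notin> Z"
    and "Z_path V E Z (even (length zs)) a c" and "is_path V E (c # rest)"
proof -
  have "\<exists>x \<in> set p. x \<notin> Z"
    using assms(2,3) last_in_set by blast
  then obtain zs c rest where split: "p = zs @ c # rest" "c \<notin> Z" "\<forall>z \<in> set zs. \<not> z \<notin> Z"
    using split_list_first_prop[of p "\<lambda>x. x \<notin> Z"] by blast
  have seg: "is_path V E (a # zs @ [c])"
    using is_path_appendD(1)[of V E "a # zs @ [c]" rest] assms(1) split(1) by simp
  have tail: "is_path V E (c # rest)"
    using is_path_appendD(2)[of V E "a # zs" "c # rest"] assms(1) split(1) by simp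
  have "Z_path V E Z (even (length zs)) a c"
    unfolding Z_path_def
    by (rule exI[of _ "a # zs @ [c]"]) (use seg split(3) in \<open>auto simp: path_len_def\<close>)
  then show thesis
    using that split(1,2) tail by simp
qed

lemma torso_path_of_path:
  assumes "is_path V E p" "hd p \<notin> Z" "last p \<notin> Z"
  shows "\<exists>p'. is_path (torso_V V E Z) (torso_E V E Z) p' \<and> hd p' = Inl (hd p) \<and> last p' = Inl (last p) \<and>
    set p' \<subseteq> Inl ` set p \<union> Inr ` (set p \<times> UNIV) \<and> (even (length p') \<longleftrightarrow> even (length p))"
  using assms
proof (induction "length p" arbitrary: p rule: less_induct)
  case less
  then obtain a p0 where p: "p = a # p0"
    by (cases p) (auto simp: is_path_def)
  have a: "a \<in> V - Z"
    using less.prems p by (auto simp: is_path_def)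
  show ?case
  proof (cases "p0 = []")
    case True
    then show ?thesis
      using p a by (intro exI[of _ "[Inl a]"]) (auto simp: is_path_def torso_V_def)
  next
    case False
    then obtain zs c rest where split: "p0 = zs @ c # rest" "c \<notin> Z"
      and seg: "Z_path V E Z (even (length zs)) a c" and tail: "is_path V E (c # rest)"
      using path_exit_Z_segment[of V E a p0 Z] less.prems p by auto
    have a_fresh: "a \<notin> set (c # rest)" and c: "c \<in> V - Z"
      using less.prems(1) p split by (auto simp: is_path_def)
    have "length (c # rest) < length p" and last: "last (c # rest) = last p"
      using p split by auto
    then have "\<exists>p''. is_path (torso_V V E Z) (torso_E V E Z) p'' \<and> hd p'' = Inl c \<and>
      last p'' = Inl (last p) \<and> set p'' \<subseteq> Inl ` set (c # rest) \<union> Inr ` (set (c # rest) \<times> UNIV) \<and>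
      (even (length p'') \<longleftrightarrow> even (length (c # rest)))"
      using less.hyps[OF _ tail] split(2) less.prems(3) by simp
    then obtain p'' where p'': "is_path (torso_V V E Z) (torso_E V E Z) p''" "hd p'' = Inl c"
      "last p'' = Inl (last p)" "set p'' \<subseteq> Inl ` set (c # rest) \<union> Inr ` (set (c # rest) \<times> UNIV)"
      "even (length p'') \<longleftrightarrow> even (length (c # rest))"
      by blast
    have fresh: "Inl a \<notin> set p''" "Inr (a, c) \<notin> set p''"
      using p''(4) a_fresh by auto
    show ?thesis
    proof (cases "even (length zs)")
      case True
      then have "(Inl a, Inl c) \<in> torso_E V E Z"
        using seg a c a_fresh unfolding torso_E_def by auto
      then show ?thesis
        using p'' fresh p split a True
        by (intro exI[of _ "Inl a # p''"]) (auto simp: is_path_iff_successively successively_Cons torso_V_def)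
    next
      case False
      then have "(a, c) \<in> torso_new V E Z"
        using seg a c a_fresh unfolding torso_new_def by auto
      moreover have "(Inl a, Inr (a, c)) \<in> torso_E V E Z" "(Inr (a, c), Inl c) \<in> torso_E V E Z"
        using calculation unfolding torso_E_def by auto
      ultimately show ?thesis
        using p'' fresh p split a False
        by (intro exI[of _ "Inl a # Inr (a, c) # p''"])
          (auto simp: is_path_iff_successively successively_Cons torso_V_def)
    qed
  qed
qed

lemma torso_V_minus_Vinf: "torso_V V E Z - torso_Vinf V E Vinf Z = Inl ` (V - Z - Vinf)"
  unfolding torso_V_def torso_Vinf_def by auto

lemma torso_solution_of_solution:
  assumes "dag V E" "Z \<subseteq> V" "omnc_solution V E Vinf T M" "M \<inter> Z = {}"
  shows "omnc_solution (torso_V V E Z) (torso_E V E Z) (torso_Vinf V E Vinf Z) (Inl ` T) (Inl ` M)"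
  unfolding omnc_solution_def
proof (intro conjI allI impI)
  show "Inl ` M \<subseteq> torso_V V E Z - torso_Vinf V E Vinf Z"
    using assms(3,4) unfolding torso_V_minus_Vinf omnc_solution_def by auto
next
  fix p' assume "odd_T_path (torso_V V E Z) (torso_E V E Z) (Inl ` T) p'"
  then obtain a b where p': "is_path (torso_V V E Z) (torso_E V E Z) p'" "odd (path_len p')"
    "hd p' = Inl a" "last p' = Inl b" "a \<in> T" "b \<in> T"
    unfolding odd_T_path_def by auto
  then obtain q where q: "q \<noteq> []" "successively (\<lambda>x y. (x, y) \<in> E) q" "hd q = a" "last q = b"
    "set q \<subseteq> Inl -` set p' \<union> Z" "even (length q) \<longleftrightarrow> even (length p')"
    using walk_of_torso_walk[of V E Z p' a b] unfolding is_path_iff_successively by blast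
  have "Inl -` set p' \<subseteq> V"
    using p'(1) unfolding is_path_def torso_V_def by auto
  then have "is_path V E q"
    using q assms(1,2) distinct_if_successively_acyclic[of E q]
    unfolding is_path_iff_successively dag_def by blast
  then have "odd_T_path V E T q"
    using q p' odd_path_len_iff[of q] odd_path_len_iff[of p'] unfolding odd_T_path_def is_path_def by auto
  then obtain m where "m \<in> set q" "m \<in> M"
    using assms(3) unfolding omnc_solution_def by blast
  with q(5) assms(4) show "set p' \<inter> Inl ` M \<noteq> {}"
    by auto
qed

lemma torso_solution_is_image:
  assumes "omnc_solution (torso_V V E Z) (torso_E V E Z) (torso_Vinf V E Vinf Z) T' M'"
  obtains M where "M' = Inl ` M" "M \<subseteq> V - Z - Vinf"
proof
  have "M' \<subseteq> Inl ` (V - Z - Vinf)"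
    using assms unfolding omnc_solution_def torso_V_minus_Vinf by auto
  then show "M' = Inl ` (Inl -` M')" "Inl -` M' \<subseteq> V - Z - Vinf"
    by (auto simp: image_vimage_eq)
qed

lemma solution_of_torso_solution:
  assumes "T \<inter> Z = {}"
    and "omnc_solution (torso_V V E Z) (torso_E V E Z) (torso_Vinf V E Vinf Z) (Inl ` T) (Inl ` M)"
  shows "omnc_solution V E Vinf T M"
  unfolding omnc_solution_def
proof (intro conjI allI impI)
  show "M \<subseteq> V - Vinf"
    using assms(2) unfolding omnc_solution_def torso_V_minus_Vinf by auto
  fix p assume "odd_T_path V E T p"
  then have p: "is_path V E p" "odd (path_len p)" "hd p \<in> T" "last p \<in> T"
    unfolding odd_T_path_def by auto
  then obtain p' where p': "is_path (torso_V V E Z) (torso_E V E Z) p'"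
    "hd p' = Inl (hd p)" "last p' = Inl (last p)" "set p' \<subseteq> Inl ` set p \<union> Inr ` (set p \<times> UNIV)"
    "even (length p') \<longleftrightarrow> even (length p)"
    using torso_path_of_path[of V E p Z] assms(1) by blast
  have "odd (path_len p')"
    using p(1,2) p'(1,5) odd_path_len_iff[of p] odd_path_len_iff[of p'] unfolding is_path_def by simp
  with p p' have "odd_T_path (torso_V V E Z) (torso_E V E Z) (Inl ` T) p'"
    unfolding odd_T_path_def by auto
  then obtain x where "x \<in> set p'" "x \<in> Inl ` M"
    using assms(2) unfolding omnc_solution_def by blast
  with p'(4) show "set p \<inter> M \<noteq> {}"
    by auto
qed

theorem corollary2p4:
  fixes V :: "'a set" and E :: "('a \<times> 'a) set" and Vinf T Z :: "'a set" and k :: nat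
  assumes "dag V E"
    and "Vinf \<subseteq> V" and "T \<subseteq> Vinf"
    and "Z \<subseteq> V - T"
  shows "(\<exists>M. omnc_solution V E Vinf T M \<and> card M \<le> k \<and> M \<inter> Z = {})
     \<longleftrightarrow> (\<exists>M'. omnc_solution (torso_V V E Z) (torso_E V E Z) (torso_Vinf V E Vinf Z) (Inl ` T) M'
                \<and> card M' \<le> k)"
proof -
  have Z: "Z \<subseteq> V" "T \<inter> Z = {}"
    using assms(4) by auto
  show ?thesis
  proof
    assume "\<exists>M. omnc_solution V E Vinf T M \<and> card M \<le> k \<and> M \<inter> Z = {}"
    then obtain M where M: "omnc_solution V E Vinf T M" "card M \<le> k" "M \<inter> Z = {}"
      by blast
    have "omnc_solution (torso_V V E Z) (torso_E V E Z) (torso_Vinf V E Vinf Z) (Inl ` T) (Inl ` M)"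
      using assms(1) Z(1) M(1,3) by (rule torso_solution_of_solution)
    moreover have "card (Inl ` M) \<le> k"
      using M(2) by (simp add: card_image)
    ultimately show "\<exists>M'. omnc_solution (torso_V V E Z) (torso_E V E Z) (torso_Vinf V E Vinf Z) (Inl ` T) M'
      \<and> card M' \<le> k"
      by blast
  next
    assume "\<exists>M'. omnc_solution (torso_V V E Z) (torso_E V E Z) (torso_Vinf V E Vinf Z) (Inl ` T) M'
      \<and> card M' \<le> k"
    then obtain M' where M': "omnc_solution (torso_V V E Z) (torso_E V E Z) (torso_Vinf V E Vinf Z) (Inl ` T) M'"
      "card M' \<le> k"
      by blast
    then obtain M where M: "M' = Inl ` M" "M \<subseteq> V - Z - Vinf"
      by (elim torso_solution_is_image)
    have "omnc_solution V E Vinf T M"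
      using Z(2) M'(1)[unfolded M(1)] by (rule solution_of_torso_solution)
    moreover have "card M \<le> k"
      using M'(2) M(1) by (simp add: card_image)
    ultimately show "\<exists>M. omnc_solution V E Vinf T M \<and> card M \<le> k \<and> M \<inter> Z = {}"
      using M(2) by blast
  qed
qed

end
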